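(* Let $f=\prod_{i=1}^n(x-r_i)^{e_i}\in k[x]$ with $r_1,\ldots,r_n\in k$ pairwise distinct and $e_i\ge1$. Then \[\det\Sigma(f)=\pm\prod_{1\le i<j\le n}(r_i-r_j)^{e_ie_j},\qquad\text{hence}\qquad \mathfrak{D}(f)=\prod_{1\le i<j\le n}(r_i-r_j)^{2e_ie_j}.\]
   Context: Let $N=\sum_ie_i$. $\Sigma(f)$ is the $N\times N$ matrix whose columns are indexed by pairs $(\ell,j)$ with $1\le\ell\le n$, $1\le j\le e_\ell$ (ordered lexicographically) and rows by $i=0,\ldots,N-1$, with $(i,(\ell,j))$ entry the coefficient of $x^i$ in $f/(x-r_\ell)^j$; equivalently $\Sigma(f)^\intercal$ is the change-of-basis matrix from the monomial basis $\{1,x,\ldots,x^{N-1}\}$ of $k[x]/(f)$ to the Newton basis $\{f/(x-r_\ell)^j\}$. The duplicant is $\mathfrak{D}(f):=(\det\Sigma(f))^2$. *)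

theory Defs
  imports "HOL-Computational_Algebra.Polynomial" "Jordan_Normal_Form.Determinant"
begin

definition root_poly :: "nat \<Rightarrow> (nat \<Rightarrow> 'a::field) \<Rightarrow> (nat \<Rightarrow> nat) \<Rightarrow> 'a poly" where
  "root_poly n r e = (\<Prod>l=1..n. [:- r l, 1:] ^ e l)"

definition sigma_cols :: "nat \<Rightarrow> (nat \<Rightarrow> nat) \<Rightarrow> (nat \<times> nat) list" where
  "sigma_cols n e = concat (map (\<lambda>l. map (\<lambda>j. (l, j)) [1..<e l + 1]) [1..<n + 1])"

definition Sigma_mat :: "nat \<Rightarrow> (nat \<Rightarrow> 'a::field) \<Rightarrow> (nat \<Rightarrow> nat) \<Rightarrow> 'a mat" where
  "Sigma_mat n r e =
     (let f = root_poly n r e; cs = sigma_cols n e; N = (\<Sum>l=1..n. e l) in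
      mat N N (\<lambda>(i, c). case cs ! c of (l, j) \<Rightarrow> coeff (f div [:- r l, 1:] ^ j) i))"

definition duplicant :: "nat \<Rightarrow> (nat \<Rightarrow> 'a::field) \<Rightarrow> (nat \<Rightarrow> nat) \<Rightarrow> 'a" where
  "duplicant n r e = (det (Sigma_mat n r e))\<^sup>2"

end

theory Submission
  imports Defs
begin

text \<open>Peel off the last root \<open>c = r\<^sub>n\<close> one multiplicity at a time. If \<open>f = (x - c) g\<close>, the
  Newton basis of \<open>f\<close> is \<open>(x - c)\<close> times that of \<open>g\<close> together with one new element
  \<open>P = \<Prod>\<^sub>i\<^sub><\<^sub>n (x - r\<^sub>i)^e\<^sub>i\<close>. Rewriting the coordinates in the basis
  \<open>(x - c) x\<^sup>k, 1\<close> changes the determinant only by a sign and makes the matrix block triangular,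
  so \<open>det \<Sigma>(f) = \<plusminus>P(c) det \<Sigma>(g)\<close> with \<open>P(c) = \<Prod>\<^sub>i (c - r\<^sub>i)^e\<^sub>i\<close>. Squaring removes all
  signs, and the products of the \<open>P(c)\<close> assemble to \<open>\<Prod>\<^sub>i\<^sub><\<^sub>j (r\<^sub>i - r\<^sub>j)^(e\<^sub>i e\<^sub>j)\<close>.\<close>

definition coeff_mat :: "nat \<Rightarrow> 'a::comm_ring_1 poly list \<Rightarrow> 'a mat" where
  "coeff_mat N ps = mat N N (\<lambda>(i, k). coeff (ps ! k) i)"

lemma coeff_mat_carrier [simp]: "coeff_mat N ps \<in> carrier_mat N N"
  by (simp add: coeff_mat_def)

lemma coeff_mat_change_of_basis:
  assumes "\<And>k. k < N \<Longrightarrow> ps ! k = (\<Sum>d<N. smult (coeff (rs ! k) d) (qs ! d))"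
  shows "coeff_mat N ps = coeff_mat N qs * coeff_mat N rs"
proof (rule eq_matI)
  fix i k assume "i < dim_row (coeff_mat N qs * coeff_mat N rs)"
    and "k < dim_col (coeff_mat N qs * coeff_mat N rs)"
  hence i: "i < N" and k: "k < N" by (simp_all add: coeff_mat_def)
  have "(coeff_mat N qs * coeff_mat N rs) $$ (i, k) = (\<Sum>d<N. coeff (qs ! d) i * coeff (rs ! k) d)"
    using i k by (auto simp: coeff_mat_def scalar_prod_def intro!: sum.cong)
  also have "\<dots> = coeff (ps ! k) i"
    using assms[OF k] by (simp add: coeff_sum mult.commute)
  finally show "coeff_mat N ps $$ (i, k) = (coeff_mat N qs * coeff_mat N rs) $$ (i, k)"
    using i k by (simp add: coeff_mat_def)
qed (simp_all add: coeff_mat_def)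

lemma sum_monom_coeff_lessThan:
  assumes "\<And>i. i \<ge> M \<Longrightarrow> coeff q i = 0"
  shows "(\<Sum>d<M. monom (coeff q d) d) = q"
proof (rule poly_eqI)
  fix i
  have "coeff (\<Sum>d<M. monom (coeff q d) d) i = (if i < M then coeff q i else 0)"
    by (simp add: coeff_sum coeff_monom eq_commute sum.delta')
  also have "\<dots> = coeff q i" using assms[of i] by auto
  finally show "coeff (\<Sum>d<M. monom (coeff q d) d) i = coeff q i" .
qed

definition linear_factor_basis :: "'a::comm_ring_1 \<Rightarrow> nat \<Rightarrow> 'a poly list" where
  "linear_factor_basis c M = map (\<lambda>k. [:-c, 1:] * monom 1 k) [0..<M] @ [1]"

lemma coeff_linear_factor_monom:
  fixes c :: "'a::comm_ring_1"
  shows "coeff ([:-c, 1:] * monom 1 k) i = (if i = Suc k then 1 else if i = k then - c else 0)"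
proof -
  have "[:-c, 1:] * monom 1 k = monom 1 (Suc k) + monom (-c) k"
    by (simp add: poly_eq_iff coeff_monom coeff_pCons split: nat.split)
  thus ?thesis by (simp add: coeff_monom)
qed

lemma det_coeff_mat_linear_factor_basis:
  "det (coeff_mat (Suc M) (linear_factor_basis c M)) = (-1) ^ M"
proof -
  let ?S = "coeff_mat (Suc M) (linear_factor_basis c M)"
  let ?D = "mat_delete ?S 0 M"
  have D: "?D \<in> carrier_mat M M" by (simp add: mat_delete_def coeff_mat_def)
  have D_entry: "?D $$ (i, k) = (if i = k then 1 else if Suc i = k then - c else 0)"
    if "i < M" "k < M" for i k
    using that by (simp add: mat_delete_def coeff_mat_def insert_index_def
        linear_factor_basis_def nth_append coeff_linear_factor_monom)
  have "det ?S = (\<Sum>i<Suc M. ?S $$ (i, M) * cofactor ?S i M)"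
    by (rule laplace_expansion_column) simp_all
  also have "\<dots> = (\<Sum>i<Suc M. if i = 0 then cofactor ?S i M else 0)"
    by (intro sum.cong refl) (simp add: coeff_mat_def linear_factor_basis_def nth_append coeff_1)
  also have "\<dots> = cofactor ?S 0 M" by simp
  also have "\<dots> = (-1) ^ M * det ?D" by (simp add: cofactor_def)
  also have "det ?D = 1"
  proof -
    have "upper_triangular ?D" using D D_entry unfolding upper_triangular_def by auto
    hence "det ?D = prod_list (diag_mat ?D)" using det_upper_triangular D by blast
    also have "\<dots> = 1" unfolding prod_list_diag_prod using D D_entry by (auto intro!: prod.neutral)
    finally show ?thesis .
  qed
  finally show ?thesis by simp
qed

lemma det_coeff_mat_snoc:
  assumes "length qs = M" and "\<forall>q\<in>set qs. degree q < M"
  shows "det (coeff_mat (Suc M) (qs @ [p])) = coeff p M * det (coeff_mat M qs)"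
proof -
  let ?A = "coeff_mat (Suc M) (qs @ [p])"
  have last_row: "?A $$ (M, k) = (if k = M then coeff p M else 0)" if "k < Suc M" for k
  proof (cases "k = M")
    case False
    hence "qs ! k \<in> set qs" using that assms(1) by auto
    hence "degree (qs ! k) < M" using assms(2) by blast
    thus ?thesis using that False assms(1) by (simp add: coeff_mat_def nth_append coeff_eq_0)
  qed (use assms(1) in \<open>simp add: coeff_mat_def nth_append\<close>)
  have "det ?A = (\<Sum>k<Suc M. ?A $$ (M, k) * cofactor ?A M k)"
    by (rule laplace_expansion_row) simp_all
  also have "\<dots> = (\<Sum>k<Suc M. if k = M then coeff p M * cofactor ?A M k else 0)"
    by (intro sum.cong refl) (simp add: last_row)
  also have "\<dots> = coeff p M * cofactor ?A M M" by simp
  also have "cofactor ?A M M = det (coeff_mat M qs)"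
    using assms(1) by (simp add: cofactor_def)
      (rule arg_cong[where f = det], rule eq_matI,
       auto simp: mat_delete_def coeff_mat_def insert_index_def nth_append)
  finally show ?thesis .
qed

lemma sum_smult_linear_factor_basis:
  fixes c :: "'a::comm_ring_1"
  shows "(\<Sum>d<Suc M. smult (coeff q d) (linear_factor_basis c M ! d))
           = [:-c, 1:] * (\<Sum>d<M. monom (coeff q d) d) + [:coeff q M:]"
proof -
  have "smult (coeff q d) (linear_factor_basis c M ! d) = [:-c, 1:] * monom (coeff q d) d"
    if "d < M" for d
  proof -
    have "monom (coeff q d) d = smult (coeff q d) (monom 1 d)" by (simp add: smult_monom)
    hence "[:-c, 1:] * monom (coeff q d) d = smult (coeff q d) ([:-c, 1:] * monom 1 d)"
      by (simp only: mult_smult_right)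
    thus ?thesis using that by (simp add: linear_factor_basis_def nth_append)
  qed
  hence "(\<Sum>d<M. smult (coeff q d) (linear_factor_basis c M ! d)) = [:-c, 1:] * (\<Sum>d<M. monom (coeff q d) d)"
    by (simp add: sum_distrib_left)
  thus ?thesis by (simp add: linear_factor_basis_def nth_append)
qed

text \<open>In the basis \<open>(x - c) x\<^sup>k, 1\<close>, whose coordinate matrix has determinant \<open>\<plusminus>1\<close>,
  the columns \<open>(x - c) q\<^sub>k\<close> have coordinates \<open>q\<^sub>k\<close>, and \<open>P = (x - c) (P div (x - c)) + P(c)\<close>
  contributes \<open>P(c)\<close> in the last row, which is otherwise zero.\<close>

lemma det_coeff_mat_linear_factor:
  fixes c :: "'a::comm_ring_1"
  assumes len: "length qs = M" and deg_qs: "\<forall>q\<in>set qs. degree q < M" and deg_P: "degree P \<le> M"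
  shows "det (coeff_mat (Suc M) (map ((*) [:-c, 1:]) qs @ [P]))
           = (-1) ^ M * (poly P c * det (coeff_mat M qs))"
proof -
  define p where "p = synthetic_div P c + monom (poly P c) M"
  have coeff_synthetic_div: "coeff (synthetic_div P c) i = 0" if "i \<ge> M" for i
  proof (cases "degree P = 0")
    case False
    thus ?thesis using that deg_P by (intro coeff_eq_0) (simp add: degree_synthetic_div)
  qed (use synthetic_div_eq_0_iff[of P c] in simp)
  have "coeff_mat (Suc M) (map ((*) [:-c, 1:]) qs @ [P])
          = coeff_mat (Suc M) (linear_factor_basis c M) * coeff_mat (Suc M) (qs @ [p])"
  proof (rule coeff_mat_change_of_basis)
    fix k assume k: "k < Suc M"
    show "(map ((*) [:-c, 1:]) qs @ [P]) ! k
            = (\<Sum>d<Suc M. smult (coeff ((qs @ [p]) ! k) d) (linear_factor_basis c M ! d))"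
    proof (cases "k = M")
      case True
      have "(\<Sum>d<M. monom (coeff p d) d) = synthetic_div P c"
        by (subst sum.cong[OF refl, where h = "\<lambda>d. monom (coeff (synthetic_div P c) d) d"])
          (simp_all add: p_def sum_monom_coeff_lessThan coeff_synthetic_div)
      moreover have "coeff p M = poly P c" by (simp add: p_def coeff_synthetic_div)
      moreover have "(qs @ [p]) ! k = p" using True len by (simp add: nth_append)
      ultimately show ?thesis
        unfolding sum_smult_linear_factor_basis using True len synthetic_div_correct'[of c P]
        by (simp add: nth_append)
    next
      case False
      hence "qs ! k \<in> set qs" using k len by auto
      hence "degree (qs ! k) < M" using deg_qs by blast
      thus ?thesis unfolding sum_smult_linear_factor_basis using k False len
        by (simp add: nth_append coeff_eq_0 sum_monom_coeff_lessThan)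
    qed
  qed
  hence "det (coeff_mat (Suc M) (map ((*) [:-c, 1:]) qs @ [P]))
          = (-1) ^ M * det (coeff_mat (Suc M) (qs @ [p]))"
    by (simp add: det_mult[of _ "Suc M"] det_coeff_mat_linear_factor_basis)
  also have "det (coeff_mat (Suc M) (qs @ [p])) = poly P c * det (coeff_mat M qs)"
    using len deg_qs by (simp add: det_coeff_mat_snoc p_def coeff_synthetic_div)
  finally show ?thesis .
qed

definition newton_basis :: "nat \<Rightarrow> (nat \<Rightarrow> 'a::field) \<Rightarrow> (nat \<Rightarrow> nat) \<Rightarrow> 'a poly list" where
  "newton_basis n r e = map (\<lambda>(l, j). root_poly n r e div [:- r l, 1:] ^ j) (sigma_cols n e)"

definition root_diff_prod :: "nat \<Rightarrow> (nat \<Rightarrow> 'a::comm_ring_1) \<Rightarrow> (nat \<Rightarrow> nat) \<Rightarrow> 'a" where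
  "root_diff_prod n r e = (\<Prod>i=1..n. \<Prod>j=i+1..n. (r i - r j) ^ (e i * e j))"

lemma sigma_cols_Suc:
  "sigma_cols (Suc n) e = sigma_cols n e @ map (\<lambda>j. (Suc n, j)) [1..<e (Suc n) + 1]"
  by (simp add: sigma_cols_def)

lemma set_sigma_cols: "set (sigma_cols n e) = {(l, j). l \<in> {1..n} \<and> j \<in> {1..e l}}"
  by (induction n) (simp add: sigma_cols_def, auto simp: sigma_cols_Suc le_Suc_eq)

lemma length_sigma_cols: "length (sigma_cols n e) = (\<Sum>l=1..n. e l)"
  by (induction n) (simp_all add: sigma_cols_Suc, simp add: sigma_cols_def)

lemma sigma_cols_fun_upd: "n < k \<Longrightarrow> sigma_cols n (e(k := m)) = sigma_cols n e"
  unfolding sigma_cols_def by (intro arg_cong[where f = concat] map_cong) auto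

lemma root_poly_Suc:
  "root_poly (Suc n) r e = root_poly n r e * [:- r (Suc n), 1:] ^ e (Suc n)"
  unfolding root_poly_def by (simp add: mult.commute)

lemma root_poly_fun_upd: "n < k \<Longrightarrow> root_poly n r (e(k := m)) = root_poly n r e"
  unfolding root_poly_def by (intro prod.cong) auto

lemma root_poly_nonzero: "root_poly n r e \<noteq> 0"
  by (simp add: root_poly_def)

lemma degree_root_poly: "degree (root_poly n r e) = (\<Sum>l=1..n. e l)"
  by (simp add: root_poly_def degree_prod_eq_sum_degree degree_linear_power)

lemma linear_factor_power_dvd_root_poly:
  assumes "(l, j) \<in> set (sigma_cols n e)"
  shows "[:- r l, 1:] ^ j dvd root_poly n r e"
proof -
  from assms have l: "l \<in> {1..n}" and j: "j \<le> e l" by (auto simp: set_sigma_cols)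
  have "[:- r l, 1:] ^ j dvd [:- r l, 1:] ^ e l" using j by (rule le_imp_power_dvd)
  also have "\<dots> dvd root_poly n r e" unfolding root_poly_def using l by (intro dvd_prodI) auto
  finally show ?thesis .
qed

lemma length_newton_basis: "length (newton_basis n r e) = (\<Sum>l=1..n. e l)"
  by (simp add: newton_basis_def length_sigma_cols)

lemma degree_newton_basis:
  assumes "q \<in> set (newton_basis n r e)"
  shows "degree q < (\<Sum>l=1..n. e l)"
proof -
  from assms obtain l j where lj: "(l, j) \<in> set (sigma_cols n e)"
    and q: "q = root_poly n r e div [:- r l, 1:] ^ j" by (auto simp: newton_basis_def)
  have "j \<ge> 1" using lj by (auto simp: set_sigma_cols)
  have f: "root_poly n r e = [:- r l, 1:] ^ j * q"
    unfolding q by (rule dvd_mult_div_cancel[symmetric], rule linear_factor_power_dvd_root_poly[OF lj])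
  hence "q \<noteq> 0" using root_poly_nonzero[of n r e] by auto
  hence "degree (root_poly n r e) = j + degree q"
    by (subst f) (simp add: degree_mult_eq degree_linear_power)
  thus ?thesis using \<open>j \<ge> 1\<close> by (simp add: degree_root_poly)
qed

lemma Sigma_mat_eq_coeff_mat: "Sigma_mat n r e = coeff_mat (\<Sum>l=1..n. e l) (newton_basis n r e)"
  unfolding Sigma_mat_def coeff_mat_def newton_basis_def Let_def
  by (rule eq_matI) (auto simp: length_sigma_cols split: prod.splits)

lemma newton_basis_Suc_0:
  "e (Suc n) = 0 \<Longrightarrow> newton_basis (Suc n) r e = newton_basis n r e"
  by (simp add: newton_basis_def sigma_cols_Suc root_poly_Suc)

lemma newton_basis_Suc:
  assumes e: "e (Suc n) = Suc m"
  shows "newton_basis (Suc n) r e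
           = map ((*) [:- r (Suc n), 1:]) (newton_basis (Suc n) r (e(Suc n := m))) @ [root_poly n r e]"
proof -
  let ?L = "[:- r (Suc n), 1:]" and ?e' = "e(Suc n := m)"
  have cols: "sigma_cols (Suc n) e = sigma_cols (Suc n) ?e' @ [(Suc n, Suc m)]"
    using e by (simp add: sigma_cols_Suc sigma_cols_fun_upd)
  have f: "root_poly (Suc n) r e = ?L * root_poly (Suc n) r ?e'"
    using e by (simp only: root_poly_Suc root_poly_fun_upd lessI fun_upd_same power_Suc
        mult.left_commute)
  have "root_poly (Suc n) r e div ?L ^ Suc m = root_poly n r e"
    unfolding root_poly_Suc e by (rule nonzero_mult_div_cancel_right, rule power_not_zero) simp
  moreover have "root_poly (Suc n) r e div [:- r l, 1:] ^ j
                   = ?L * (root_poly (Suc n) r ?e' div [:- r l, 1:] ^ j)"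
    if "(l, j) \<in> set (sigma_cols (Suc n) ?e')" for l j
    using div_mult_swap[OF linear_factor_power_dvd_root_poly[OF that], of ?L] f
    by (simp only: mult.commute)
  ultimately show ?thesis
    unfolding newton_basis_def cols by (auto simp del: mult_pCons_left)
qed

lemma root_diff_prod_fun_upd: "n < k \<Longrightarrow> root_diff_prod n r (e(k := m)) = root_diff_prod n r e"
  unfolding root_diff_prod_def by (intro prod.cong refl) auto

lemma root_diff_prod_Suc:
  "root_diff_prod (Suc n) r e
     = root_diff_prod n r e * (\<Prod>i=1..n. (r i - r (Suc n)) ^ (e i * e (Suc n)))"
proof -
  have "root_diff_prod (Suc n) r e = (\<Prod>i=1..n. \<Prod>j=i+1..Suc n. (r i - r j) ^ (e i * e j))"
    unfolding root_diff_prod_def by simp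
  also have "\<dots> = (\<Prod>i=1..n. (r i - r (Suc n)) ^ (e i * e (Suc n))
                               * (\<Prod>j=i+1..n. (r i - r j) ^ (e i * e j)))"
    by (intro prod.cong refl) (simp add: prod.nat_ivl_Suc')
  finally show ?thesis
    by (simp add: root_diff_prod_def prod.distrib mult.commute)
qed

lemma root_diff_prod_Suc_Suc:
  assumes "e (Suc n) = Suc m"
  shows "root_diff_prod (Suc n) r e
           = (\<Prod>i=1..n. (r i - r (Suc n)) ^ e i) * root_diff_prod (Suc n) r (e(Suc n := m))"
proof -
  have "(\<Prod>i=1..n. (r i - r (Suc n)) ^ ((e(Suc n := m)) i * m))
          = (\<Prod>i=1..n. (r i - r (Suc n)) ^ (e i * m))"
    by (intro prod.cong) auto
  thus ?thesis
    using assms by (simp add: root_diff_prod_Suc root_diff_prod_fun_upd power_add prod.distrib ac_simps)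
qed

lemma poly_root_poly: "poly (root_poly n r e) c = (\<Prod>i=1..n. (c - r i) ^ e i)"
  by (simp add: root_poly_def poly_prod)

lemma Sigma_mat_Suc_0:
  "e (Suc n) = 0 \<Longrightarrow> Sigma_mat (Suc n) r e = Sigma_mat n r e"
  by (simp add: Sigma_mat_eq_coeff_mat newton_basis_Suc_0)

lemma det_Sigma_mat_Suc:
  assumes e: "e (Suc n) = Suc m"
  shows "det (Sigma_mat (Suc n) r e)
           = (-1) ^ ((\<Sum>l=1..n. e l) + m)
             * (poly (root_poly n r e) (r (Suc n)) * det (Sigma_mat (Suc n) r (e(Suc n := m))))"
proof -
  let ?e' = "e(Suc n := m)" and ?M = "(\<Sum>l=1..n. e l) + m"
  have "(\<Sum>l=1..n. ?e' l) = (\<Sum>l=1..n. e l)" by (intro sum.cong) auto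
  hence M': "(\<Sum>l=1..Suc n. ?e' l) = ?M" by simp
  have M: "(\<Sum>l=1..Suc n. e l) = Suc ?M" using e by simp
  show ?thesis
    unfolding Sigma_mat_eq_coeff_mat M M' newton_basis_Suc[of e n m r, OF e]
  proof (rule det_coeff_mat_linear_factor)
    show "length (newton_basis (Suc n) r ?e') = ?M" using M' by (simp add: length_newton_basis)
    show "\<forall>q\<in>set (newton_basis (Suc n) r ?e'). degree q < ?M" using M' degree_newton_basis by metis
    show "degree (root_poly n r e) \<le> ?M" by (simp add: degree_root_poly)
  qed
qed

lemma power_diff_commute_sq:
  fixes a b :: "'a::comm_ring_1"
  shows "((a - b) ^ k)\<^sup>2 = ((b - a) ^ k)\<^sup>2"
proof -
  have "((a - b) ^ k)\<^sup>2 = ((a - b)\<^sup>2) ^ k" "((b - a) ^ k)\<^sup>2 = ((b - a)\<^sup>2) ^ k"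
    by (metis power_mult mult.commute)+
  thus ?thesis by (simp only: power2_commute[of a b])
qed

lemma det_Sigma_mat_sq:
  fixes r :: "nat \<Rightarrow> 'a::field"
  shows "(det (Sigma_mat n r e))\<^sup>2 = (root_diff_prod n r e)\<^sup>2"
proof (induction n arbitrary: e)
  case 0
  show ?case by (simp add: Sigma_mat_eq_coeff_mat coeff_mat_def root_diff_prod_def)
next
  case (Suc n)
  have "(det (Sigma_mat (Suc n) r e))\<^sup>2 = (root_diff_prod (Suc n) r e)\<^sup>2" if "e (Suc n) = k" for e k
    using that
  proof (induction k arbitrary: e)
    case 0
    thus ?case using Suc.IH by (simp add: Sigma_mat_Suc_0 root_diff_prod_Suc)
  next
    case (Suc m)
    let ?e' = "e(Suc n := m)"
    have "(det (Sigma_mat (Suc n) r e))\<^sup>2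
            = (poly (root_poly n r e) (r (Suc n)))\<^sup>2 * (det (Sigma_mat (Suc n) r ?e'))\<^sup>2"
      by (simp add: det_Sigma_mat_Suc[of e n m r, OF Suc.prems] power_mult_distrib power_mult[symmetric])
    also have "(poly (root_poly n r e) (r (Suc n)))\<^sup>2 = (\<Prod>i=1..n. (r i - r (Suc n)) ^ e i)\<^sup>2"
      unfolding poly_root_poly prod_power_distrib by (intro prod.cong refl power_diff_commute_sq)
    also have "(det (Sigma_mat (Suc n) r ?e'))\<^sup>2 = (root_diff_prod (Suc n) r ?e')\<^sup>2"
      by (rule Suc.IH) simp
    finally show ?case
      by (simp add: root_diff_prod_Suc_Suc[of e n m r, OF Suc.prems] power_mult_distrib)
  qed
  thus ?case by blast
qed

theorem mainTheorem10:
  fixes n :: nat and r :: "nat \<Rightarrow> 'a::field" and e :: "nat \<Rightarrow> nat"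
  assumes "inj_on r {1..n}"
    and "\<And>i. i \<in> {1..n} \<Longrightarrow> e i \<ge> 1"
  shows "(\<exists>s \<in> {1, -1}. det (Sigma_mat n r e) = s * (\<Prod>i=1..n. \<Prod>j=i+1..n. (r i - r j) ^ (e i * e j)))
       \<and> duplicant n r e = (\<Prod>i=1..n. \<Prod>j=i+1..n. (r i - r j) ^ (2 * e i * e j))"
proof
  have "det (Sigma_mat n r e) = root_diff_prod n r e \<or> det (Sigma_mat n r e) = - root_diff_prod n r e"
    using det_Sigma_mat_sq power2_eq_iff by blast
  thus "\<exists>s \<in> {1, -1}. det (Sigma_mat n r e) = s * (\<Prod>i=1..n. \<Prod>j=i+1..n. (r i - r j) ^ (e i * e j))"
    unfolding root_diff_prod_def by auto
  have "(root_diff_prod n r e)\<^sup>2 = (\<Prod>i=1..n. \<Prod>j=i+1..n. (r i - r j) ^ (2 * e i * e j))"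
    unfolding root_diff_prod_def prod_power_distrib power_mult[symmetric]
    by (simp add: ac_simps)
  thus "duplicant n r e = (\<Prod>i=1..n. \<Prod>j=i+1..n. (r i - r j) ^ (2 * e i * e j))"
    by (simp add: duplicant_def det_Sigma_mat_sq)
qed

end
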